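(* Let $n$ run over positive integers such that $m=n^2+1$ satisfies $r_2(m)\le32$, and let $\lambda=m+\delta$ with $0<|\delta|<1/10$; put $R=\sqrt\lambda$ and $w=(0,2)$. Then, for $R$ sufficiently large, $$\sum_{v\in\mathbb{Z}^2}C(v,w)\ \ge\ \frac{2}{\delta^2}+O\Big(\frac{1}{|\delta|}\Big)+\sum_{v\in V_2}S_w(v),$$ with an absolute implied constant.
   Context: $r_2(m)=\#\{\xi\in\mathbb{Z}^2:|\xi|^2=m\}$. For $v\in\mathbb{Z}^2$, $c(v)=\frac{1}{|v|^2-\lambda}$ and $C(v,w)=c(v)c(v+w)$. $V_2=\{v\in\mathbb{Z}^2: C(v,w)<0,\ |v|^2\ne m,\ |v+w|^2\ne m,\ \sqrt R/2\le|\langle v,w\rangle|\le3R\}$. For $v\in\mathbb{Z}^2$, let $\operatorname{Nbr}_w(v)=\{C(v-w,w)+C(v,w),\ C(v,w)+C(v+w,w)\}$ and let $S_w(v)$ be the element of $\operatorname{Nbr}_w(v)$ of smallest absolute value (the smaller one in case of a tie). *)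

theory Defs
  imports "HOL-Analysis.Analysis"
begin

definition r2 :: "nat \<Rightarrow> nat" where
  "r2 m = card {\<xi> :: int \<times> int. (fst \<xi>)\<^sup>2 + (snd \<xi>)\<^sup>2 = int m}"

definition nsq :: "int \<times> int \<Rightarrow> int" where
  "nsq v = (fst v)\<^sup>2 + (snd v)\<^sup>2"

definition ip :: "int \<times> int \<Rightarrow> int \<times> int \<Rightarrow> int" where
  "ip v w = fst v * fst w + snd v * snd w"

definition vadd :: "int \<times> int \<Rightarrow> int \<times> int \<Rightarrow> int \<times> int" where
  "vadd v w = (fst v + fst w, snd v + snd w)"

definition vsub :: "int \<times> int \<Rightarrow> int \<times> int \<Rightarrow> int \<times> int" where
  "vsub v w = (fst v - fst w, snd v - snd w)"

definition cfun :: "real \<Rightarrow> int \<times> int \<Rightarrow> real" where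
  "cfun lam v = 1 / (real_of_int (nsq v) - lam)"

definition Cfun :: "real \<Rightarrow> int \<times> int \<Rightarrow> int \<times> int \<Rightarrow> real" where
  "Cfun lam v w = cfun lam v * cfun lam (vadd v w)"

definition V2 :: "real \<Rightarrow> nat \<Rightarrow> real \<Rightarrow> int \<times> int \<Rightarrow> (int \<times> int) set" where
  "V2 lam m R w = {v. Cfun lam v w < 0 \<and> nsq v \<noteq> int m \<and> nsq (vadd v w) \<noteq> int m \<and>
      sqrt R / 2 \<le> \<bar>real_of_int (ip v w)\<bar> \<and> \<bar>real_of_int (ip v w)\<bar> \<le> 3 * R}"

text \<open>S_w(v): element of Nbr_w(v) of smallest absolute value (smaller one on ties).\<close>
definition Sfun :: "real \<Rightarrow> int \<times> int \<Rightarrow> int \<times> int \<Rightarrow> real" where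
  "Sfun lam w v =
     (let a = Cfun lam (vsub v w) w + Cfun lam v w;
          b = Cfun lam v w + Cfun lam (vadd v w) w
      in if \<bar>a\<bar> < \<bar>b\<bar> then a else if \<bar>b\<bar> < \<bar>a\<bar> then b else min a b)"

end

theory Submission
  imports Defs
begin

text \<open>The sum converges absolutely since \<open>|C(v,w)| \<lesssim> c(v)\<^sup>2 + c(v+w)\<^sup>2\<close>. For the lower bound
  only finitely many terms are negative, so the full sum dominates any finite partial sum containing
  them. The points \<open>(\<plusminus>n, -1)\<close> and \<open>(\<plusminus>n, 1)\<close> lie on \<open>|v|\<^sup>2 = m\<close>, giving two terms \<open>1/\<delta>\<^sup>2\<close>.
  Every negative term is \<open>\<ge> -2/|\<delta>|\<close>, and outside \<open>V\<^sub>2\<close> there are at most \<open>32 + 32 + 10\<close> of them: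
  those touching the circle (\<open>r\<^sub>2(m) \<le> 32\<close>) and those with \<open>|\<langle>v,w\<rangle>|\<close> small, which must
  sit at \<open>(\<plusminus>n, y)\<close> with \<open>-3 \<le> y \<le> 1\<close>. On \<open>V\<^sub>2\<close>, \<open>S\<^sub>w(v) = C(v,w) + C(u,w)\<close> for a neighbour
  \<open>u = v \<plusminus> w\<close>; discarding the negative \<open>C(u,w)\<close>, the remaining neighbours are distinct by a
  convexity argument along the column of \<open>v\<close>, and are neither negative terms nor the two circle points.\<close>

section \<open>Summability\<close>

definition inv_one_plus_sq :: "int \<Rightarrow> real" where
  "inv_one_plus_sq a = 1 / (1 + (real_of_int a)\<^sup>2)"

lemma inv_one_plus_sq_nonneg: "inv_one_plus_sq a \<ge> 0"
  unfolding inv_one_plus_sq_def by simp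

lemma summable_on_inv_one_plus_sq_nat: "(\<lambda>n::nat. inv_one_plus_sq (int n)) summable_on UNIV"
proof (rule summable_nonneg_imp_summable_on)
  show "summable (\<lambda>n::nat. inv_one_plus_sq (int n))"
  proof (rule summable_comparison_test'[where N=1])
    show "summable (\<lambda>n::nat. inverse (real n ^ 2))"
      by (rule inverse_power_summable) auto
    fix n :: nat assume "1 \<le> n"
    then show "norm (inv_one_plus_sq (int n)) \<le> inverse (real n ^ 2)"
      unfolding inv_one_plus_sq_def by (simp add: inverse_eq_divide frac_le)
  qed
qed (simp add: inv_one_plus_sq_nonneg)

lemma summable_on_inv_one_plus_sq: "inv_one_plus_sq summable_on UNIV"
proof -
  let ?neg = "\<lambda>n::nat. - int n - 1"
  have pos_part: "inv_one_plus_sq summable_on range int"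
    using summable_on_inv_one_plus_sq_nat summable_on_reindex[of int UNIV inv_one_plus_sq]
    by (simp add: o_def)
  have "(\<lambda>n. inv_one_plus_sq (?neg n)) summable_on UNIV"
  proof (rule summable_on_comparison_test[OF summable_on_inv_one_plus_sq_nat])
    fix n :: nat
    have "(real n)\<^sup>2 \<le> (- real n - 1)\<^sup>2" by (simp add: power2_eq_square algebra_simps)
    then show "inv_one_plus_sq (?neg n) \<le> inv_one_plus_sq (int n)"
      unfolding inv_one_plus_sq_def by (intro divide_left_mono) (auto intro!: mult_pos_pos add_pos_nonneg)
  qed (simp add: inv_one_plus_sq_nonneg)
  moreover have "inj ?neg" by (auto simp: inj_def)
  ultimately have neg_part: "inv_one_plus_sq summable_on range ?neg"
    using summable_on_reindex[of ?neg UNIV inv_one_plus_sq] by (simp add: o_def)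
  have "x \<in> range int \<union> range ?neg" for x :: int
  proof (cases "x \<ge> 0")
    case False
    then have "x = ?neg (nat (- x - 1))" by simp
    then show ?thesis by blast
  qed (metis UnI1 nonneg_int_cases rangeI)
  then have "UNIV = range int \<union> range ?neg" by blast
  moreover have "range int \<inter> range ?neg = {}" by auto
  ultimately show ?thesis using summable_on_Un_disjoint[OF pos_part neg_part] by simp
qed

lemma summable_on_inv_one_plus_sq_prod:
  "(\<lambda>v. inv_one_plus_sq (fst v) * inv_one_plus_sq (snd v)) summable_on UNIV"
proof -
  have "(\<lambda>v. inv_one_plus_sq (fst v) * inv_one_plus_sq (snd v)) summable_on UNIV \<times> UNIV"
  proof (rule summable_on_SigmaI[where g="\<lambda>x. inv_one_plus_sq x * infsum inv_one_plus_sq UNIV"])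
    fix x :: int
    show "((\<lambda>y. inv_one_plus_sq (fst (x, y)) * inv_one_plus_sq (snd (x, y)))
            has_sum inv_one_plus_sq x * infsum inv_one_plus_sq UNIV) UNIV"
      using has_sum_cmult_right[OF has_sum_infsum[OF summable_on_inv_one_plus_sq]] by simp
    show "inv_one_plus_sq (fst (x, y)) * inv_one_plus_sq (snd (x, y)) \<ge> 0" for y
      by (simp add: inv_one_plus_sq_nonneg)
  qed (rule summable_on_cmult_left[OF summable_on_inv_one_plus_sq])
  then show ?thesis by simp
qed

lemma inv_one_plus_sq_shift_le: "inv_one_plus_sq (b + 2) \<le> 9 * inv_one_plus_sq b"
proof -
  have "0 \<le> 8 * (real_of_int b + 9/4)\<^sup>2 + 7/2" by simp
  then have "1 + (real_of_int b)\<^sup>2 \<le> 9 * (1 + (real_of_int b + 2)\<^sup>2)"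
    by (simp add: power2_eq_square algebra_simps)
  then show ?thesis unfolding inv_one_plus_sq_def by (simp add: field_simps add_pos_nonneg)
qed

lemma abs_int_minus_shift_ge:
  assumes "lam = real m + d" "\<bar>d\<bar> < 1/10"
  shows "\<bar>d\<bar> \<le> \<bar>real_of_int k - lam\<bar>"
    and "k \<noteq> int m \<Longrightarrow> 9/10 \<le> \<bar>real_of_int k - lam\<bar>"
proof -
  have eq: "real_of_int k - lam = real_of_int (k - int m) - d" using assms(1) by simp
  have "k = int m \<or> 1 \<le> \<bar>real_of_int (k - int m)\<bar>" by linarith
  then show "\<bar>d\<bar> \<le> \<bar>real_of_int k - lam\<bar>" using eq assms(2) by auto
  show "9/10 \<le> \<bar>real_of_int k - lam\<bar>" if "k \<noteq> int m"
  proof -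
    have "1 \<le> \<bar>real_of_int (k - int m)\<bar>" using that by linarith
    then show ?thesis using eq assms(2) by linarith
  qed
qed

lemma abs_cfun_le:
  assumes "lam = real m + d" "\<bar>d\<bar> < 1/10" "0 < \<bar>d\<bar>"
  shows "\<bar>cfun lam x\<bar> \<le> 1 / \<bar>d\<bar>"
    and "nsq x \<noteq> int m \<Longrightarrow> \<bar>cfun lam x\<bar> \<le> 10/9"
proof -
  show "\<bar>cfun lam x\<bar> \<le> 1 / \<bar>d\<bar>"
    using abs_int_minus_shift_ge(1)[OF assms(1,2)] assms(3) unfolding cfun_def by (simp add: frac_le)
  show "\<bar>cfun lam x\<bar> \<le> 10/9" if "nsq x \<noteq> int m"
    using abs_int_minus_shift_ge(2)[OF assms(1,2) that] frac_le[of 1 1 "9/10"]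
    unfolding cfun_def by simp
qed

text \<open>The denominator \<open>|v|\<^sup>2 - \<lambda>\<close> is at least \<open>|\<delta>|\<close> near the circle and comparable to
  \<open>1 + |v|\<^sup>2\<close> far from it, whence \<open>c(v)\<^sup>2 \<lesssim> (1 + a\<^sup>2)\<^sup>-\<^sup>1 (1 + b\<^sup>2)\<^sup>-\<^sup>1\<close> for \<open>v = (a, b)\<close>.\<close>

lemma cfun_sq_le:
  assumes "lam = real m + d" "0 < \<bar>d\<bar>" "\<bar>d\<bar> < 1/10" "m \<ge> 1"
  shows "(cfun lam x)\<^sup>2 \<le> (1 / (\<bar>d\<bar> / (2 * lam + 2))\<^sup>2) * (inv_one_plus_sq (fst x) * inv_one_plus_sq (snd x))"
proof -
  define e where "e = \<bar>d\<bar> / (2 * lam + 2)"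
  define a where "a = real_of_int (fst x)"
  define b where "b = real_of_int (snd x)"
  define t where "t = real_of_int (nsq x)"
  have t: "t = a\<^sup>2 + b\<^sup>2" unfolding t_def a_def b_def nsq_def by simp
  have lam_pos: "lam > 0" using assms by simp
  have e_pos: "e > 0" and e_half: "e \<le> 1/2"
    unfolding e_def using lam_pos assms by (auto simp: field_simps)
  have far: "e * (1 + t) \<le> \<bar>t - lam\<bar>"
  proof (cases "t \<ge> 2 * lam + 1")
    case True
    then have "e * (1 + t) \<le> (1/2) * (1 + t)" using e_half t by (intro mult_right_mono) auto
    then show ?thesis using True by auto
  next
    case False
    then have "e * (1 + t) \<le> e * (2 * lam + 2)" using e_pos by (intro mult_left_mono) auto
    also have "\<dots> = \<bar>d\<bar>" unfolding e_def using lam_pos by simp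
    also have "\<dots> \<le> \<bar>t - lam\<bar>" unfolding t_def by (rule abs_int_minus_shift_ge(1)[OF assms(1,3)])
    finally show ?thesis .
  qed
  have "(1 + a\<^sup>2) * (1 + b\<^sup>2) \<le> (1 + t)\<^sup>2"
  proof -
    have "0 \<le> a\<^sup>2 * b\<^sup>2 + a\<^sup>2 + b\<^sup>2 + a ^ 4 + b ^ 4" by simp
    then show ?thesis unfolding t by (simp add: power2_eq_square algebra_simps power4_eq_xxxx)
  qed
  then have "e\<^sup>2 * ((1 + a\<^sup>2) * (1 + b\<^sup>2)) \<le> (e * (1 + t))\<^sup>2"
    by (simp add: power_mult_distrib mult_left_mono)
  also have "\<dots> \<le> (t - lam)\<^sup>2"
    using power_mono[OF far, of 2] e_pos t by (simp add: add_nonneg_nonneg)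
  finally have denom: "e\<^sup>2 * ((1 + a\<^sup>2) * (1 + b\<^sup>2)) \<le> (t - lam)\<^sup>2" .
  have denom_pos: "0 < e\<^sup>2 * ((1 + a\<^sup>2) * (1 + b\<^sup>2))" using e_pos by (simp add: add_pos_nonneg)
  have "(cfun lam x)\<^sup>2 = 1 / (t - lam)\<^sup>2" unfolding cfun_def t_def by (simp add: power_divide)
  also have "\<dots> \<le> 1 / (e\<^sup>2 * ((1 + a\<^sup>2) * (1 + b\<^sup>2)))"
    using denom denom_pos by (intro divide_left_mono mult_pos_pos) (auto simp: add_pos_nonneg)
  also have "\<dots> = (1 / e\<^sup>2) * (inv_one_plus_sq (fst x) * inv_one_plus_sq (snd x))"
    unfolding inv_one_plus_sq_def a_def b_def by simp
  finally show ?thesis unfolding e_def .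
qed

lemma summable_on_Cfun:
  assumes "lam = real m + d" "0 < \<bar>d\<bar>" "\<bar>d\<bar> < 1/10" "m \<ge> 1"
  shows "(\<lambda>v. Cfun lam v (0, 2)) summable_on UNIV"
proof -
  define M where "M = 1 / (\<bar>d\<bar> / (2 * lam + 2))\<^sup>2"
  define g where "g = (\<lambda>v. inv_one_plus_sq (fst v) * inv_one_plus_sq (snd v))"
  have "norm (Cfun lam v (0, 2)) \<le> 5 * M * g v" for v :: "int \<times> int"
  proof -
    have v: "(cfun lam v)\<^sup>2 \<le> M * g v"
      unfolding M_def g_def by (rule cfun_sq_le[OF assms])
    have "(cfun lam (vadd v (0, 2)))\<^sup>2 \<le> M * (inv_one_plus_sq (fst v) * inv_one_plus_sq (snd v + 2))"
      using cfun_sq_le[OF assms, of "vadd v (0, 2)"] unfolding M_def by (simp add: vadd_def)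
    also have "\<dots> \<le> M * (inv_one_plus_sq (fst v) * (9 * inv_one_plus_sq (snd v)))"
      unfolding M_def
      by (intro mult_left_mono inv_one_plus_sq_shift_le) (auto simp: inv_one_plus_sq_nonneg)
    finally have vw: "(cfun lam (vadd v (0, 2)))\<^sup>2 \<le> 9 * (M * g v)" unfolding g_def by simp
    have "\<bar>cfun lam v * cfun lam (vadd v (0, 2))\<bar> \<le> ((cfun lam v)\<^sup>2 + (cfun lam (vadd v (0, 2)))\<^sup>2) / 2"
    proof -
      have "0 \<le> (\<bar>cfun lam v\<bar> - \<bar>cfun lam (vadd v (0, 2))\<bar>)\<^sup>2" by simp
      then show ?thesis by (simp add: power2_eq_square algebra_simps abs_mult)
    qed
    then show ?thesis using v vw unfolding Cfun_def real_norm_def by argo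
  qed
  then have "(\<lambda>v. norm (Cfun lam v (0, 2))) summable_on UNIV"
    using summable_on_comparison_test[OF summable_on_cmult_right[OF summable_on_inv_one_plus_sq_prod, of "5 * M"]]
    unfolding g_def by (simp add: mult.assoc)
  then show ?thesis by (rule abs_summable_summable)
qed

section \<open>Negative terms\<close>

lemma Cfun_eq: "Cfun lam v w = 1 / ((real_of_int (nsq v) - lam) * (real_of_int (nsq (vadd v w)) - lam))"
  unfolding Cfun_def cfun_def by simp

lemma Cfun_neg_iff:
  "Cfun lam v w < 0 \<longleftrightarrow> (real_of_int (nsq v) - lam) * (real_of_int (nsq (vadd v w)) - lam) < 0"
  unfolding Cfun_eq by (simp add: divide_less_0_iff)

lemma Cfun_nonneg_iff:
  "0 \<le> Cfun lam v w \<longleftrightarrow> 0 \<le> (real_of_int (nsq v) - lam) * (real_of_int (nsq (vadd v w)) - lam)"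
  unfolding Cfun_eq by (simp add: zero_le_divide_iff)

lemma Cfun_neg_imp_nsq_less:
  "Cfun lam v w < 0 \<Longrightarrow> real_of_int (nsq v) < lam \<or> real_of_int (nsq (vadd v w)) < lam"
  unfolding Cfun_neg_iff by (auto simp: mult_less_0_iff)

lemma abs_le_power2_int: "\<bar>a::int\<bar> \<le> a\<^sup>2"
proof (cases "a = 0")
  case False
  then have "\<bar>a\<bar> * 1 \<le> \<bar>a\<bar> * \<bar>a\<bar>" by (intro mult_left_mono) auto
  then show ?thesis by (simp add: power2_eq_square abs_mult_self_eq)
qed simp

lemma finite_nsq_le: "finite {v. nsq v \<le> k}"
proof (rule finite_subset)
  show "{v. nsq v \<le> k} \<subseteq> {-k..k} \<times> {-k..k}"
  proof
    fix v :: "int \<times> int" assume "v \<in> {v. nsq v \<le> k}"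
    then have "(fst v)\<^sup>2 + (snd v)\<^sup>2 \<le> k" by (simp add: nsq_def)
    then show "v \<in> {-k..k} \<times> {-k..k}"
      using abs_le_power2_int[of "fst v"] abs_le_power2_int[of "snd v"]
        zero_le_power2[of "fst v"] zero_le_power2[of "snd v"]
      by (cases v) (auto simp: abs_le_iff)
  qed
qed simp

lemma finite_Cfun_neg: "finite {v. Cfun lam v w < 0}"
proof (rule finite_subset)
  define D where "D = {v. nsq v \<le> \<lceil>lam\<rceil>}"
  show "{v. Cfun lam v w < 0} \<subseteq> D \<union> (\<lambda>v. vadd v w) -` D"
    unfolding D_def by (auto dest!: Cfun_neg_imp_nsq_less simp: le_ceiling_iff)
  have "inj (\<lambda>v. vadd v w)" by (auto simp: inj_def vadd_def)
  then show "finite (D \<union> (\<lambda>v. vadd v w) -` D)"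
    unfolding D_def by (intro finite_UnI finite_nsq_le finite_vimageI)
qed

text \<open>Both factors of a negative term cannot have denominator \<open>-\<delta>\<close>, so one of them is at most \<open>10/9\<close>.\<close>

lemma Cfun_neg_ge:
  assumes "lam = real m + d" "0 < \<bar>d\<bar>" "\<bar>d\<bar> < 1/10" and neg: "Cfun lam v w < 0"
  shows "- 2 / \<bar>d\<bar> \<le> Cfun lam v w"
proof -
  have one_off: "nsq v \<noteq> int m \<or> nsq (vadd v w) \<noteq> int m"
    using neg assms(1) unfolding Cfun_neg_iff by auto
  note bounds = abs_cfun_le[OF assms(1,3,2)]
  have "\<bar>cfun lam v\<bar> * \<bar>cfun lam (vadd v w)\<bar> \<le> (10/9) * (1 / \<bar>d\<bar>)"
  proof (cases "nsq v = int m")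
    case True
    then have "\<bar>cfun lam (vadd v w)\<bar> \<le> 10/9" using one_off bounds(2) by blast
    then have "\<bar>cfun lam v\<bar> * \<bar>cfun lam (vadd v w)\<bar> \<le> (1 / \<bar>d\<bar>) * (10/9)"
      using bounds(1)[of v] by (intro mult_mono) auto
    then show ?thesis by (simp add: mult.commute)
  next
    case False
    then show ?thesis using bounds(1)[of "vadd v w"] bounds(2)[OF False] by (intro mult_mono) auto
  qed
  also have "\<dots> \<le> 2 / \<bar>d\<bar>" using assms(2) by (simp add: field_simps)
  finally show ?thesis unfolding Cfun_def abs_mult[symmetric] by linarith
qed

section \<open>Pairing \<open>V\<^sub>2\<close> with nonnegative neighbours\<close>

text \<open>The values \<open>f(Y), f(Y+2), f(Y+4), f(Y+6)\<close> of \<open>f(Y) = Y\<^sup>2 - A\<close> cannot have sign pattern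
  \<open>- + + -\<close>, as \<open>3 f(Y+2) \<le> 2 f(Y) + f(Y+6)\<close> by convexity; the pattern \<open>+ - - +\<close> puts the vertex
  \<open>Y = 0\<close> between \<open>Y+2\<close> and \<open>Y+4\<close>.\<close>

lemma quadratic_sign_pattern:
  fixes Y A :: real
  assumes "(Y\<^sup>2 - A) * ((Y + 2)\<^sup>2 - A) < 0" "((Y + 4)\<^sup>2 - A) * ((Y + 6)\<^sup>2 - A) < 0"
    and "0 \<le> ((Y + 2)\<^sup>2 - A) * ((Y + 4)\<^sup>2 - A)"
  shows "-5 < Y \<and> Y < -1"
proof -
  define f where "f = (\<lambda>t. t\<^sup>2 - A)"
  have signs: "f Y * f (Y + 2) < 0" "f (Y + 4) * f (Y + 6) < 0" "0 \<le> f (Y + 2) * f (Y + 4)"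
    using assms unfolding f_def by auto
  have convex: "3 * f (Y + 2) \<le> 2 * f Y + f (Y + 6)"
    unfolding f_def by (simp add: power2_eq_square algebra_simps)
  have slope_left: "f Y - f (Y + 2) = - 4 * Y - 4" and slope_right: "f (Y + 6) - f (Y + 4) = 4 * Y + 20"
    unfolding f_def by (simp_all add: power2_eq_square algebra_simps)
  consider "f (Y + 2) > 0" | "f (Y + 2) < 0" using signs(1) by fastforce
  then show ?thesis
  proof cases
    case 1
    then have "f Y < 0" "f (Y + 4) > 0" using signs by (auto simp: mult_less_0_iff zero_le_mult_iff)
    then have "f (Y + 6) < 0" using signs(2) by (simp add: mult_less_0_iff)
    with 1 \<open>f Y < 0\<close> convex show ?thesis by linarith
  next
    case 2
    then have "f Y > 0" "f (Y + 4) < 0" using signs by (auto simp: mult_less_0_iff zero_le_mult_iff)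
    moreover from this have "f (Y + 6) > 0" using signs(2) by (simp add: mult_less_0_iff)
    ultimately show ?thesis using 2 slope_left slope_right by linarith
  qed
qed

lemma V2_stacked_nonneg_between:
  assumes v: "v \<in> V2 lam m R (0, 2)" and v': "v' \<in> V2 lam m R (0, 2)"
    and stacked: "vsub v (0, 2) = vadd v' (0, 2)" and between: "0 \<le> Cfun lam (vsub v (0, 2)) (0, 2)"
  shows "sqrt R \<le> 8"
proof -
  obtain x y where v_eq: "v = (x, y)" by (cases v)
  have v'_eq: "v' = (x, y - 4)" using stacked v_eq by (cases v') (auto simp: vsub_def vadd_def)
  define Y where "Y = real_of_int y - 4"
  define A where "A = lam - (real_of_int x)\<^sup>2"
  have "(Y\<^sup>2 - A) * ((Y + 2)\<^sup>2 - A) < 0"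
    using v' unfolding V2_def Cfun_neg_iff v'_eq Y_def A_def nsq_def vadd_def
    by (simp add: algebra_simps)
  moreover have "((Y + 4)\<^sup>2 - A) * ((Y + 6)\<^sup>2 - A) < 0"
    using v unfolding V2_def Cfun_neg_iff v_eq Y_def A_def nsq_def vadd_def
    by (simp add: algebra_simps)
  moreover have "0 \<le> ((Y + 2)\<^sup>2 - A) * ((Y + 4)\<^sup>2 - A)"
    using between unfolding Cfun_nonneg_iff v_eq Y_def A_def nsq_def vadd_def vsub_def
    by (simp add: algebra_simps)
  ultimately have "-5 < Y \<and> Y < -1" by (rule quadratic_sign_pattern)
  then have "\<bar>real_of_int (ip v (0, 2))\<bar> \<le> 4" unfolding v_eq Y_def ip_def by simp
  moreover have "sqrt R / 2 \<le> \<bar>real_of_int (ip v (0, 2))\<bar>" using v by (simp add: V2_def)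
  ultimately show ?thesis by linarith
qed

definition Sfun_partner :: "real \<Rightarrow> int \<times> int \<Rightarrow> int \<times> int \<Rightarrow> int \<times> int" where
  "Sfun_partner lam w v =
     (let a = Cfun lam (vsub v w) w + Cfun lam v w;
          b = Cfun lam v w + Cfun lam (vadd v w) w
      in if \<bar>a\<bar> < \<bar>b\<bar> \<or> (\<not> \<bar>b\<bar> < \<bar>a\<bar> \<and> a \<le> b) then vsub v w else vadd v w)"

lemma Sfun_eq_partner: "Sfun lam w v = Cfun lam v w + Cfun lam (Sfun_partner lam w v) w"
  unfolding Sfun_def Sfun_partner_def Let_def by (auto simp: min_def)

lemma Sfun_partner_cases: "Sfun_partner lam w v = vsub v w \<or> Sfun_partner lam w v = vadd v w"
  unfolding Sfun_partner_def Let_def by auto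

lemma inj_on_Sfun_partner:
  assumes "8 < sqrt R"
  shows "inj_on (Sfun_partner lam (0, 2))
           {v \<in> V2 lam m R (0, 2). 0 \<le> Cfun lam (Sfun_partner lam (0, 2) v) (0, 2)}"
proof (rule inj_onI)
  let ?p = "Sfun_partner lam (0, 2)" and ?V = "V2 lam m R (0, 2)"
  have no_cross: False
    if "v \<in> ?V" "v' \<in> ?V" "?p v = vsub v (0, 2)" "?p v' = vadd v' (0, 2)" "?p v = ?p v'"
       "0 \<le> Cfun lam (?p v) (0, 2)" for v v'
    using V2_stacked_nonneg_between[of v lam m R v'] that assms by simp
  fix v v'
  assume v: "v \<in> {v \<in> ?V. 0 \<le> Cfun lam (?p v) (0, 2)}"
    and v': "v' \<in> {v \<in> ?V. 0 \<le> Cfun lam (?p v) (0, 2)}" and same: "?p v = ?p v'"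
  consider "?p v = vsub v (0, 2)" "?p v' = vsub v' (0, 2)"
    | "?p v = vadd v (0, 2)" "?p v' = vadd v' (0, 2)"
    | "?p v = vsub v (0, 2)" "?p v' = vadd v' (0, 2)"
    | "?p v = vadd v (0, 2)" "?p v' = vsub v' (0, 2)"
    using Sfun_partner_cases by metis
  then show "v = v'"
  proof cases
    case 3
    then show ?thesis using no_cross[of v v'] v v' same by simp
  next
    case 4
    then show ?thesis using no_cross[of v' v] v v' same by simp
  qed (use same in \<open>auto simp: vsub_def vadd_def prod_eq_iff\<close>)
qed

lemma sum_Sfun_le:
  assumes "finite (V2 lam m R (0, 2))" "8 < sqrt R"
  defines "P \<equiv> Sfun_partner lam (0, 2) ` {v \<in> V2 lam m R (0, 2). 0 \<le> Cfun lam (Sfun_partner lam (0, 2) v) (0, 2)}"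
  shows "(\<Sum>v\<in>V2 lam m R (0, 2). Sfun lam (0, 2) v)
           \<le> (\<Sum>v\<in>V2 lam m R (0, 2). Cfun lam v (0, 2)) + (\<Sum>u\<in>P. Cfun lam u (0, 2))"
proof -
  let ?V = "V2 lam m R (0, 2)" and ?C = "\<lambda>u. Cfun lam u (0, 2)" and ?p = "Sfun_partner lam (0, 2)"
  let ?V' = "{v \<in> ?V. 0 \<le> ?C (?p v)}"
  have "(\<Sum>v\<in>?V. ?C (?p v)) = (\<Sum>v\<in>?V - ?V'. ?C (?p v)) + (\<Sum>v\<in>?V'. ?C (?p v))"
    by (rule sum.subset_diff) (use assms(1) in auto)
  also have "\<dots> \<le> (\<Sum>v\<in>?V'. ?C (?p v))" by (auto intro: sum_nonpos)
  also have "\<dots> = (\<Sum>u\<in>P. ?C u)"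
    unfolding P_def using inj_on_Sfun_partner[OF assms(2), of lam m] by (simp add: sum.reindex)
  finally show ?thesis unfolding Sfun_eq_partner sum.distrib by simp
qed

context
  fixes n :: nat and \<delta> lam :: real
  assumes n_pos: "1 \<le> n" and lam_eq: "lam = real (n\<^sup>2 + 1) + \<delta>"
    and delta_pos: "0 < \<bar>\<delta>\<bar>" and delta_small: "\<bar>\<delta>\<bar> < 1/10"
    and sqrt_lam_ge: "100 \<le> sqrt lam"
begin

lemma sqrt_lam_less: "sqrt lam < real n + 1"
proof -
  have "lam < (real n + 1)\<^sup>2"
    using lam_eq delta_small n_pos by (simp add: power2_eq_square algebra_simps)
  then show ?thesis using real_sqrt_less_mono by fastforce
qed

lemma n_ge_100: "100 \<le> n"
  using sqrt_lam_less sqrt_lam_ge by linarith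

lemma sqrt_sqrt_lam_gt: "8 < sqrt (sqrt lam)"
proof -
  have "sqrt 100 \<le> sqrt (sqrt lam)" using sqrt_lam_ge by (rule real_sqrt_le_mono)
  moreover have "sqrt 100 = (10::real)" by (rule real_sqrt_unique) auto
  ultimately show ?thesis by simp
qed

lemma nsq_near_lam:
  shows "real_of_int k < lam \<Longrightarrow> k \<le> int n ^ 2 + 1" and "lam < real_of_int k \<Longrightarrow> int n ^ 2 + 1 \<le> k"
proof -
  have lam_int: "lam = real_of_int (int n ^ 2 + 1) + \<delta>" using lam_eq by simp
  show "k \<le> int n ^ 2 + 1" if "real_of_int k < lam" using that lam_int delta_small by linarith
  show "int n ^ 2 + 1 \<le> k" if "lam < real_of_int k" using that lam_int delta_small by linarith
qed

text \<open>Close to the axis \<open>x = 0\<close>, the circle \<open>|v|\<^sup>2 = \<lambda>\<close> runs between consecutive rows only at the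
  lattice points \<open>(\<plusminus>n, y)\<close>, because \<open>m = n\<^sup>2 + 1\<close>.\<close>

lemma Cfun_neg_near_axis:
  assumes small: "16 * y\<^sup>2 < int n + 1" and neg: "Cfun lam (x, y) (0, 2) < 0"
  shows "\<bar>x\<bar> = int n \<and> -3 \<le> y \<and> y \<le> 1"
proof -
  define M where "M = int n ^ 2 + 1"
  have rows: "(x\<^sup>2 + y\<^sup>2 \<le> M \<and> M \<le> x\<^sup>2 + (y + 2)\<^sup>2) \<or> (x\<^sup>2 + (y + 2)\<^sup>2 \<le> M \<and> M \<le> x\<^sup>2 + y\<^sup>2)"
    using neg nsq_near_lam unfolding Cfun_neg_iff M_def nsq_def vadd_def
    by (auto simp: mult_less_0_iff)
  have "0 \<le> (y - 2)\<^sup>2" by simp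
  then have y_rows: "(y + 2)\<^sup>2 < 2 * int n" "y\<^sup>2 < 2 * int n"
    using small n_ge_100 by (simp_all add: power2_eq_square algebra_simps)
  have x_eq: "\<bar>x\<bar> = int n"
  proof (rule ccontr)
    assume "\<bar>x\<bar> \<noteq> int n"
    then consider "int n + 1 \<le> \<bar>x\<bar>" | "\<bar>x\<bar> \<le> int n - 1" by linarith
    then show False
    proof cases
      case 1
      then have "(int n + 1)\<^sup>2 \<le> \<bar>x\<bar>\<^sup>2" by (intro power_mono) auto
      then have "M + 2 * int n \<le> x\<^sup>2" unfolding M_def by (simp add: power2_eq_square algebra_simps)
      then show False using rows n_ge_100 zero_le_power2[of y] zero_le_power2[of "y + 2"] by linarith
    next
      case 2
      then have "\<bar>x\<bar>\<^sup>2 \<le> (int n - 1)\<^sup>2" by (intro power_mono) auto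
      then have "x\<^sup>2 + 2 * int n \<le> M" unfolding M_def by (simp add: power2_eq_square algebra_simps)
      then show False using rows y_rows by linarith
    qed
  qed
  then have "(y\<^sup>2 \<le> 1 \<and> 1 \<le> (y + 2)\<^sup>2) \<or> ((y + 2)\<^sup>2 \<le> 1 \<and> 1 \<le> y\<^sup>2)"
    using rows unfolding M_def by (auto simp: power2_abs[of x, symmetric])
  then have "\<bar>y\<bar> \<le> 1 \<or> \<bar>y + 2\<bar> \<le> 1"
    by (metis abs_le_square_iff abs_one one_power2 power2_abs)
  then show ?thesis using x_eq by auto
qed

lemma Cfun_neg_not_V2:
  assumes neg: "Cfun lam v (0, 2) < 0" and not_V2: "v \<notin> V2 lam (n\<^sup>2 + 1) (sqrt lam) (0, 2)"
    and off_circle: "nsq v \<noteq> int (n\<^sup>2 + 1)" "nsq (vadd v (0, 2)) \<noteq> int (n\<^sup>2 + 1)"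
  shows "v \<in> {int n, - int n} \<times> {-3..1}"
proof -
  obtain x y where v: "v = (x, y)" by (cases v)
  have "(real_of_int x)\<^sup>2 + (real_of_int y)\<^sup>2 < lam \<or> (real_of_int x)\<^sup>2 + (real_of_int y + 2)\<^sup>2 < lam"
    using Cfun_neg_imp_nsq_less[OF neg] unfolding v nsq_def vadd_def by simp
  then have "(real_of_int y)\<^sup>2 < lam \<or> (real_of_int y + 2)\<^sup>2 < lam"
    using zero_le_power2[of "real_of_int x"] by linarith
  then have "\<bar>real_of_int y\<bar> < sqrt lam \<or> \<bar>real_of_int y + 2\<bar> < sqrt lam"
    using real_less_rsqrt by (metis power2_abs)
  then have "\<bar>real_of_int (ip v (0, 2))\<bar> \<le> 3 * sqrt lam"
    unfolding v ip_def using sqrt_lam_ge by auto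
  then have "4 * \<bar>real_of_int y\<bar> < sqrt (sqrt lam)"
    using neg not_V2 off_circle unfolding V2_def v ip_def by auto
  then have "(4 * \<bar>real_of_int y\<bar>)\<^sup>2 < (sqrt (sqrt lam))\<^sup>2"
    by (intro power_strict_mono) auto
  moreover have "(sqrt (sqrt lam))\<^sup>2 = sqrt lam"
    using sqrt_lam_ge by (intro real_sqrt_pow2) linarith
  ultimately have "(4 * \<bar>real_of_int y\<bar>)\<^sup>2 < sqrt lam" by simp
  then have "real_of_int (16 * y\<^sup>2) < real_of_int (int n + 1)"
    using sqrt_lam_less by (simp add: power_mult_distrib)
  then have "16 * y\<^sup>2 < int n + 1" by linarith
  then show ?thesis using Cfun_neg_near_axis[of y x] neg unfolding v by (auto simp: abs_if split: if_splits)
qed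

lemma card_Cfun_neg_diff_V2:
  assumes "r2 (n\<^sup>2 + 1) \<le> 32"
  shows "card ({v. Cfun lam v (0, 2) < 0} - V2 lam (n\<^sup>2 + 1) (sqrt lam) (0, 2)) \<le> 74"
proof -
  define Circ where "Circ = {v. nsq v = int (n\<^sup>2 + 1)}"
  define E :: "(int \<times> int) set" where "E = {int n, - int n} \<times> {-3..1}"
  have fin_Circ: "finite Circ"
    by (rule finite_subset[OF _ finite_nsq_le[of "int (n\<^sup>2 + 1)"]]) (auto simp: Circ_def)
  have card_Circ: "card Circ \<le> 32" using assms unfolding Circ_def r2_def nsq_def by simp
  have card_E: "card E \<le> 10"
  proof -
    have "card {int n, - int n} \<le> 2" by (rule card_insert_le_m1) auto
    then show ?thesis unfolding E_def card_cartesian_product by simp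
  qed
  have "{v. Cfun lam v (0, 2) < 0} - V2 lam (n\<^sup>2 + 1) (sqrt lam) (0, 2)
          \<subseteq> Circ \<union> (\<lambda>u. vsub u (0, 2)) ` Circ \<union> E"
  proof
    fix v assume v: "v \<in> {v. Cfun lam v (0, 2) < 0} - V2 lam (n\<^sup>2 + 1) (sqrt lam) (0, 2)"
    have "v = vsub (vadd v (0, 2)) (0, 2)" by (simp add: vadd_def vsub_def)
    then show "v \<in> Circ \<union> (\<lambda>u. vsub u (0, 2)) ` Circ \<union> E"
      using Cfun_neg_not_V2[of v] v unfolding Circ_def E_def by blast
  qed
  then have "card ({v. Cfun lam v (0, 2) < 0} - V2 lam (n\<^sup>2 + 1) (sqrt lam) (0, 2))
               \<le> card (Circ \<union> (\<lambda>u. vsub u (0, 2)) ` Circ \<union> E)"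
    by (rule card_mono[rotated]) (simp add: fin_Circ E_def)
  also have "\<dots> \<le> card Circ + card ((\<lambda>u. vsub u (0, 2)) ` Circ) + card E"
    by (meson card_Un_le add_right_mono order_trans)
  finally show ?thesis using card_Circ card_E card_image_le[OF fin_Circ, of "\<lambda>u. vsub u (0, 2)"]
    by linarith
qed

lemma sum_Cfun_neg_diff_V2_ge:
  assumes "r2 (n\<^sup>2 + 1) \<le> 32"
  shows "- 148 / \<bar>\<delta>\<bar> \<le> (\<Sum>v\<in>{v. Cfun lam v (0, 2) < 0} - V2 lam (n\<^sup>2 + 1) (sqrt lam) (0, 2). Cfun lam v (0, 2))"
    (is "_ \<le> sum _ ?D")
proof -
  have "real 74 * (- 2 / \<bar>\<delta>\<bar>) \<le> real (card ?D) * (- 2 / \<bar>\<delta>\<bar>)"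
    using card_Cfun_neg_diff_V2[OF assms] delta_pos by (intro mult_right_mono_neg) auto
  also have "\<dots> \<le> (\<Sum>v\<in>?D. Cfun lam v (0, 2))"
    using Cfun_neg_ge[OF lam_eq delta_pos delta_small] by (intro sum_bounded_below) auto
  finally show ?thesis by simp
qed

text \<open>The two terms of size \<open>1/\<delta>\<^sup>2\<close>: both \<open>(\<plusminus>n, -1)\<close> and \<open>(\<plusminus>n, 1)\<close> lie on \<open>|v|\<^sup>2 = m\<close>.\<close>

lemma sum_Cfun_circle_points: "(\<Sum>v\<in>{(int n, -1), (- int n, -1)}. Cfun lam v (0, 2)) = 2 / \<delta>\<^sup>2"
proof -
  have "Cfun lam (x, -1) (0, 2) = 1 / \<delta>\<^sup>2" if "x\<^sup>2 = int n ^ 2" for x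
    using that lam_eq unfolding Cfun_eq nsq_def vadd_def by (simp add: power2_eq_square)
  moreover have "int n \<noteq> - int n" using n_pos by simp
  ultimately show ?thesis by simp
qed

lemma Sfun_partner_not_circle_point:
  assumes "v \<in> V2 lam (n\<^sup>2 + 1) (sqrt lam) (0, 2)"
  shows "Sfun_partner lam (0, 2) v \<notin> {(int n, -1), (- int n, -1)}"
proof -
  have off_circle: "nsq v \<noteq> int (n\<^sup>2 + 1)" "nsq (vadd v (0, 2)) \<noteq> int (n\<^sup>2 + 1)"
    using assms by (auto simp: V2_def)
  have "vsub v (0, 2) \<notin> {(int n, -1), (- int n, -1)}"
  proof
    assume "vsub v (0, 2) \<in> {(int n, -1), (- int n, -1)}"
    then have "v \<in> {(int n, 1), (- int n, 1)}" by (cases v) (auto simp: vsub_def)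
    then show False using off_circle(1) by (auto simp: nsq_def)
  qed
  moreover have "vadd v (0, 2) \<notin> {(int n, -1), (- int n, -1)}"
    using off_circle(2) by (auto simp: nsq_def)
  ultimately show ?thesis using Sfun_partner_cases[of lam "(0, 2)" v] by auto
qed

lemma infsum_Cfun_ge:
  assumes "r2 (n\<^sup>2 + 1) \<le> 32"
  shows "2 / \<delta>\<^sup>2 - 148 / \<bar>\<delta>\<bar> + (\<Sum>v\<in>V2 lam (n\<^sup>2 + 1) (sqrt lam) (0, 2). Sfun lam (0, 2) v)
           \<le> (\<Sum>\<^sub>\<infinity>v. Cfun lam v (0, 2))"
proof -
  define C where "C = (\<lambda>v. Cfun lam v (0, 2))"
  define V where "V = V2 lam (n\<^sup>2 + 1) (sqrt lam) (0, 2)"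
  define N where "N = {v. C v < 0}"
  define Q :: "(int \<times> int) set" where "Q = {(int n, -1), (- int n, -1)}"
  define P where "P = Sfun_partner lam (0, 2) ` {v \<in> V. 0 \<le> C (Sfun_partner lam (0, 2) v)}"
  have fin_N: "finite N" unfolding N_def C_def by (rule finite_Cfun_neg)
  have "V \<subseteq> N" unfolding V_def N_def C_def V2_def by auto
  then have fin_V: "finite V" using fin_N finite_subset by blast
  have "0 < C v" if "v \<in> Q" for v
    using that lam_eq delta_pos unfolding Q_def C_def Cfun_eq nsq_def vadd_def
    by (auto simp: zero_less_mult_iff)
  then have disjoint: "N \<inter> Q = {}" "N \<inter> P = {}" "Q \<inter> P = {}"
    using Sfun_partner_not_circle_point unfolding N_def Q_def P_def V_def by force+
  have fin_Q: "finite Q" and fin_P: "finite P" unfolding Q_def P_def using fin_V by simp_all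
  have "sum C N + sum C Q + sum C P = sum C (N \<union> Q) + sum C P"
    using fin_N fin_Q disjoint by (simp add: sum.union_disjoint)
  also have "\<dots> = sum C (N \<union> Q \<union> P)"
    using fin_N fin_Q fin_P disjoint by (subst sum.union_disjoint) auto
  also have "\<dots> \<le> infsum C UNIV"
    using summable_on_Cfun[OF lam_eq delta_pos delta_small] fin_N fin_Q fin_P
    unfolding C_def N_def by (intro finite_sum_le_infsum) auto
  finally have "sum C N + sum C Q + sum C P \<le> infsum C UNIV" .
  moreover have "sum C N = sum C (N - V) + sum C V" by (rule sum.subset_diff[OF \<open>V \<subseteq> N\<close> fin_N])
  moreover have "sum (Sfun lam (0, 2)) V \<le> sum C V + sum C P"
    unfolding V_def P_def C_def by (rule sum_Sfun_le[OF fin_V[unfolded V_def] sqrt_sqrt_lam_gt])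
  ultimately show ?thesis
    using sum_Cfun_neg_diff_V2_ge[OF assms] sum_Cfun_circle_points
    unfolding C_def N_def V_def Q_def by linarith
qed

end

theorem corollary5p3:
  shows "\<exists>K R0::real. \<forall>(n::nat) (\<delta>::real).
     (let m = n\<^sup>2 + 1; lam = real m + \<delta>; R = sqrt lam; w = (0::int, 2::int) in
       (1 \<le> n \<and> r2 m \<le> 32 \<and> 0 < \<bar>\<delta>\<bar> \<and> \<bar>\<delta>\<bar> < 1/10 \<and> R0 \<le> R) \<longrightarrow>
       ((\<lambda>v. Cfun lam v w) summable_on UNIV \<and>
        (\<Sum>\<^sub>\<infinity>v. Cfun lam v w) \<ge>
          2 / \<delta>\<^sup>2 - K / \<bar>\<delta>\<bar> + (\<Sum>v\<in>V2 lam m R w. Sfun lam w v)))"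
  unfolding Let_def
proof (rule exI[of _ 148], rule exI[of _ 100], intro allI impI)
  fix n :: nat and \<delta> :: real
  assume "1 \<le> n \<and> r2 (n\<^sup>2 + 1) \<le> 32 \<and> 0 < \<bar>\<delta>\<bar> \<and> \<bar>\<delta>\<bar> < 1/10 \<and> 100 \<le> sqrt (real (n\<^sup>2 + 1) + \<delta>)"
  then have n: "1 \<le> n" and r2: "r2 (n\<^sup>2 + 1) \<le> 32" and \<delta>: "0 < \<bar>\<delta>\<bar>" "\<bar>\<delta>\<bar> < 1/10"
    and R: "100 \<le> sqrt (real (n\<^sup>2 + 1) + \<delta>)"
    by simp_all
  show "(\<lambda>v. Cfun (real (n\<^sup>2 + 1) + \<delta>) v (0, 2)) summable_on UNIV \<and>
      2 / \<delta>\<^sup>2 - 148 / \<bar>\<delta>\<bar> + (\<Sum>v\<in>V2 (real (n\<^sup>2 + 1) + \<delta>) (n\<^sup>2 + 1) (sqrt (real (n\<^sup>2 + 1) + \<delta>)) (0, 2).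
        Sfun (real (n\<^sup>2 + 1) + \<delta>) (0, 2) v) \<le> (\<Sum>\<^sub>\<infinity>v. Cfun (real (n\<^sup>2 + 1) + \<delta>) v (0, 2))"
    using summable_on_Cfun[of _ "n\<^sup>2 + 1", OF refl \<delta>] infsum_Cfun_ge[OF n refl \<delta> R r2] by simp
qed

end
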